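(* Let $\mathbb{F}$ be a field and $n,p,r$ integers with $0<r\le\min(n,p)$, and assume $|\mathbb{F}|>r+1$. Let $J_r := \begin{bmatrix} I_r & 0 \\ 0 & 0 \end{bmatrix}\in M_{n,p}(\mathbb{F})$ and $M = \begin{bmatrix} A & C \\ B & D \end{bmatrix}\in M_{n,p}(\mathbb{F})$ with $A\in M_r(\mathbb{F})$, $C\in M_{r,p-r}(\mathbb{F})$, $B\in M_{n-r,r}(\mathbb{F})$, $D\in M_{n-r,p-r}(\mathbb{F})$. If $\operatorname{rk}(J_r+tM)\le r$ for all $t\in\mathbb{F}$, then $D=0$ and $BA^kC=0$ for every integer $k\ge 0$. *)

theory Defs
  imports "Jordan_Normal_Form.DL_Rank" "Jordan_Normal_Form.Matrix"
begin

definition J_mat :: "nat \<Rightarrow> nat \<Rightarrow> nat \<Rightarrow> 'a :: field mat" where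
  "J_mat n p r = four_block_mat (1\<^sub>m r) (0\<^sub>m r (p - r)) (0\<^sub>m (n - r) r) (0\<^sub>m (n - r) (p - r))"

end

theory Submission
  imports Defs "Jordan_Normal_Form.DL_Rank_Submatrix" "Jordan_Normal_Form.Char_Poly"
begin

(* Fix i < n - r and j < p - r, and let b be row i of B, c column j of C and d = D(i,j).
   The (r+1)-minor of J_r + t M on the rows 1..r, r+i and the columns 1..r, r+j is
   det S(t) with S(X) = [[I + X A, X c], [X b, X d]]. By the rank hypothesis it vanishes
   at every t, and as it is a polynomial of degree at most r + 1 in t, it is the zero
   polynomial. Hence the last row (w, \<delta>) of the adjugate of S(X) is a left null vector
   of S(X), and \<delta>(0) = det I = 1. The resulting relations w (I + X A) = - X \<delta> b and
   w c + \<delta> d = 0 give d = 0 by evaluation at 0, and then w A^k c = 0 and b A^k c = 0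
   by induction on k, evaluating at 0 again in each step. *)

lemma poly_eq_0_if_roots_exceed_degree:
  fixes q :: "'a::field poly"
  assumes roots: "\<And>t. poly q t = 0"
    and card: "infinite (UNIV :: 'a set) \<or> card (UNIV :: 'a set) > degree q"
  shows "q = 0"
proof (rule ccontr)
  assume "q \<noteq> 0"
  moreover have "{t. poly q t = 0} = UNIV" using roots by auto
  ultimately show False
    using poly_roots_finite[of q] card_poly_roots_bound[of q] card by auto
qed

lemma pow_mat_Suc_left:
  assumes "A \<in> carrier_mat n n"
  shows "A ^\<^sub>m Suc k = A * A ^\<^sub>m k"
proof (induction k)
  case 0
  then show ?case using assms by simp
next
  case (Suc k)
  have "A ^\<^sub>m Suc (Suc k) = A ^\<^sub>m Suc k * A" by simp
  also have "\<dots> = (A * A ^\<^sub>m k) * A" by (simp only: Suc.IH)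
  also have "\<dots> = A * (A ^\<^sub>m k * A)"
    using assms by (rule assoc_mult_mat) (use assms in simp_all)
  finally show ?case by simp
qed

lemma pick_insert_lessThan:
  assumes "a \<le> r" and "r \<le> k"
  shows "pick (insert k {..<r}) a = (if a < r then a else k)"
proof (cases "a < r")
  case True
  then have "{x \<in> insert k {..<r}. x < a} = {..<a}" using assms(2) by auto
  then show ?thesis using pick_card_in_set[of a "insert k {..<r}"] True by simp
next
  case False
  then have "a = r" using assms(1) by simp
  moreover have "{x \<in> insert k {..<r}. x < k} = {..<r}" using assms(2) by auto
  ultimately show ?thesis using pick_card_in_set[of k "insert k {..<r}"] by simp
qed

lemma submatrix_insert_lessThan:
  assumes "r + i < dim_row X" and "r + j < dim_col X"
  shows "submatrix X (insert (r + i) {..<r}) (insert (r + j) {..<r})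
    = mat (Suc r) (Suc r) (\<lambda>(a, b). X $$ (if a < r then a else r + i, if b < r then b else r + j))"
proof -
  have "{x. x < dim_row X \<and> x \<in> insert (r + i) {..<r}} = insert (r + i) {..<r}"
    "{x. x < dim_col X \<and> x \<in> insert (r + j) {..<r}} = insert (r + j) {..<r}"
    using assms by auto
  then have card: "card {x. x < dim_row X \<and> x \<in> insert (r + i) {..<r}} = Suc r"
    "card {x. x < dim_col X \<and> x \<in> insert (r + j) {..<r}} = Suc r"
    by simp_all
  show ?thesis
    unfolding submatrix_def card by (rule cong_mat) (auto simp: pick_insert_lessThan)
qed

definition pencil :: "'a::comm_ring_1 mat \<Rightarrow> 'a mat \<Rightarrow> 'a poly mat" where
  "pencil J M = mat (dim_row J) (dim_col J) (\<lambda>ij. [:J $$ ij, M $$ ij:])"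

lemma pencil_carrier_mat [simp]: "J \<in> carrier_mat n m \<Longrightarrow> pencil J M \<in> carrier_mat n m"
  unfolding pencil_def by (metis carrier_matD mat_carrier)

lemma map_mat_poly_pencil:
  assumes "M \<in> carrier_mat (dim_row J) (dim_col J)"
  shows "map_mat (\<lambda>q. poly q t) (pencil J M) = J + t \<cdot>\<^sub>m M"
  using assms by (intro eq_matI) (auto simp: pencil_def)

lemma det_pencil_eq_0:
  fixes J M :: "'a::field mat"
  assumes J: "J \<in> carrier_mat n n" and M: "M \<in> carrier_mat n n"
    and singular: "\<And>t. det (J + t \<cdot>\<^sub>m M) = 0"
    and card: "infinite (UNIV :: 'a set) \<or> card (UNIV :: 'a set) > n"
  shows "det (pencil J M) = 0"
proof (rule poly_eq_0_if_roots_exceed_degree)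
  show "poly (det (pencil J M)) t = 0" for t
    using comm_ring_hom.hom_det[OF poly_hom.comm_ring_hom_axioms, of t "pencil J M"]
      map_mat_poly_pencil[of M J t] singular J M by simp
  have "degree (det (pencil J M)) \<le> 1 * n"
    by (rule degree_det_le) (use J in \<open>auto simp: pencil_def\<close>)
  then show "infinite (UNIV :: 'a set) \<or> card (UNIV :: 'a set) > degree (det (pencil J M))"
    using card by auto
qed

definition bordered_mat :: "'a::zero mat \<Rightarrow> 'a vec \<Rightarrow> 'a vec \<Rightarrow> 'a \<Rightarrow> 'a mat" where
  "bordered_mat A b c d =
    four_block_mat A (mat_of_cols (dim_row A) [c]) (mat_of_rows (dim_col A) [b]) (mat 1 1 (\<lambda>_. d))"

lemma bordered_mat_carrier_mat [simp]:
  "A \<in> carrier_mat r r \<Longrightarrow> bordered_mat A b c d \<in> carrier_mat (Suc r) (Suc r)"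
  using four_block_carrier_mat[of A r r "mat 1 1 (\<lambda>_. d)" 1 1] by (simp add: bordered_mat_def)

lemma J_mat_carrier_mat [simp]: "r \<le> n \<Longrightarrow> r \<le> p \<Longrightarrow> J_mat n p r \<in> carrier_mat n p"
  unfolding J_mat_def
  by (metis four_block_carrier_mat le_add_diff_inverse one_carrier_mat zero_carrier_mat)

(* The hypothesis says that the row vector (w, \<delta>) annihilates the first r columns
   of [[I + X A, X c], [X b, X d]]. *)
lemma left_null_vector_krylov_recurrence:
  fixes A :: "'a::field mat" and b c :: "'a vec" and w :: "nat \<Rightarrow> 'a poly" and \<delta> :: "'a poly"
  assumes A: "A \<in> carrier_mat r r" and c: "c \<in> carrier_vec r"
    and cols: "\<And>l. l < r \<Longrightarrow>
      w l + pCons 0 ((\<Sum>m<r. smult (A $$ (m, l)) (w m)) + smult (b $ l) \<delta>) = 0"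
  defines "h \<equiv> \<lambda>k. \<Sum>m<r. smult ((A ^\<^sub>m k *\<^sub>v c) $ m) (w m)"
  shows "h k + pCons 0 (h (Suc k) + smult (b \<bullet> (A ^\<^sub>m k *\<^sub>v c)) \<delta>) = 0"
proof -
  define x where "x = A ^\<^sub>m k *\<^sub>v c"
  have x: "x \<in> carrier_vec r"
    using mult_mat_vec_carrier[OF pow_carrier_mat[OF A] c] by (simp add: x_def)
  have x_Suc: "A ^\<^sub>m Suc k *\<^sub>v c = A *\<^sub>v x"
    unfolding x_def pow_mat_Suc_left[OF A] using A c by (simp add: assoc_mult_mat_vec[of _ r r _ r])
  have h_Suc: "h (Suc k) = (\<Sum>m<r. smult ((A *\<^sub>v x) $ m) (w m))"
    by (simp only: h_def x_Suc)
  have "0 = (\<Sum>l<r. smult (x $ l)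
      (w l + pCons 0 ((\<Sum>m<r. smult (A $$ (m, l)) (w m)) + smult (b $ l) \<delta>)))"
    using cols by simp
  also have "\<dots> = h k + pCons 0 ((\<Sum>l<r. \<Sum>m<r. smult (x $ l * A $$ (m, l)) (w m))
      + smult (\<Sum>l<r. b $ l * x $ l) \<delta>)"
    by (simp add: h_def x_def smult_add_right sum.distrib smult_sum smult_sum2
        sum_pCons_0_commute mult.commute)
  also have "(\<Sum>l<r. \<Sum>m<r. smult (x $ l * A $$ (m, l)) (w m)) = h (Suc k)"
    using A x by (subst sum.swap)
      (auto simp: h_Suc scalar_prod_def smult_sum atLeast0LessThan mult.commute
        intro!: sum.cong)
  also have "(\<Sum>l<r. b $ l * x $ l) = b \<bullet> x"
    using x by (simp add: scalar_prod_def atLeast0LessThan)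
  finally show ?thesis by (simp add: x_def)
qed

lemma markov_zero_of_left_null_vector:
  fixes A :: "'a::field mat" and b c :: "'a vec" and w :: "nat \<Rightarrow> 'a poly" and \<delta> :: "'a poly"
  assumes A: "A \<in> carrier_mat r r" and c: "c \<in> carrier_vec r"
    and \<delta>: "poly \<delta> 0 = 1"
    and cols: "\<And>l. l < r \<Longrightarrow>
      w l + pCons 0 ((\<Sum>m<r. smult (A $$ (m, l)) (w m)) + smult (b $ l) \<delta>) = 0"
    and last_col: "pCons 0 ((\<Sum>m<r. smult (c $ m) (w m)) + smult d \<delta>) = 0"
  shows "d = 0 \<and> (\<forall>k. b \<bullet> (A ^\<^sub>m k *\<^sub>v c) = 0)"
proof -
  define h where "h k = (\<Sum>m<r. smult ((A ^\<^sub>m k *\<^sub>v c) $ m) (w m))" for k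
  have step: "h k + pCons 0 (h (Suc k) + smult (b \<bullet> (A ^\<^sub>m k *\<^sub>v c)) \<delta>) = 0" for k
    unfolding h_def by (rule left_null_vector_krylov_recurrence[OF A c cols])
  have "poly (w l) 0 = 0" if "l < r" for l
    using arg_cong[OF cols[OF that], of "\<lambda>q. poly q 0"] by simp
  then have h_at_0: "poly (h k) 0 = 0" for k
    by (simp add: h_def poly_sum)
  have h0: "h 0 + smult d \<delta> = 0"
    using last_col A c by (simp add: h_def)
  have "poly (h 0 + smult d \<delta>) 0 = 0"
    unfolding h0 by simp
  then have d: "d = 0"
    using h_at_0[of 0] \<delta> by simp
  have h_zero: "h k = 0" for k
  proof (induction k)
    case 0
    then show ?case using h0 d by simp
  next
    case (Suc k)
    then have hs: "h (Suc k) + smult (b \<bullet> (A ^\<^sub>m k *\<^sub>v c)) \<delta> = 0"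
      using step[of k] by simp
    have "poly (h (Suc k) + smult (b \<bullet> (A ^\<^sub>m k *\<^sub>v c)) \<delta>) 0 = 0"
      unfolding hs by simp
    then have "b \<bullet> (A ^\<^sub>m k *\<^sub>v c) = 0"
      using h_at_0[of "Suc k"] \<delta> by simp
    then show ?case using hs by simp
  qed
  have "b \<bullet> (A ^\<^sub>m k *\<^sub>v c) = 0" for k
    using step[of k] h_zero \<delta> by auto
  then show ?thesis using d by simp
qed

lemma index_pencil_J_mat_bordered_mat:
  fixes A :: "'a::field mat"
  assumes "A \<in> carrier_mat r r" and "b \<in> carrier_vec r" and "c \<in> carrier_vec r"
    and "l < Suc r" and "m < Suc r"
  shows "pencil (J_mat (Suc r) (Suc r) r) (bordered_mat A b c d) $$ (l, m) =
    [:of_bool (l = m \<and> l < r),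
      if l < r then if m < r then A $$ (l, m) else c $ l else if m < r then b $ m else d:]"
  using assms
  by (simp add: pencil_def J_mat_def bordered_mat_def mat_of_rows_index mat_of_cols_Cons_index_0)

lemma markov_zero_of_det_bordered_pencil:
  fixes A :: "'a::field mat"
  assumes A: "A \<in> carrier_mat r r" and b: "b \<in> carrier_vec r" and c: "c \<in> carrier_vec r"
    and singular: "det (pencil (J_mat (Suc r) (Suc r) r) (bordered_mat A b c d)) = 0"
  shows "d = 0 \<and> (\<forall>k. b \<bullet> (A ^\<^sub>m k *\<^sub>v c) = 0)"
proof -
  define S where "S = pencil (J_mat (Suc r) (Suc r) r) (bordered_mat A b c d)"
  have S: "S \<in> carrier_mat (Suc r) (Suc r)"
    by (simp add: S_def)
  note S_index = index_pencil_J_mat_bordered_mat[OF A b c, where d = d, folded S_def]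
  define w where "w l = adj_mat S $$ (r, l)" for l
  define \<delta> where "\<delta> = adj_mat S $$ (r, r)"
  have null: "(\<Sum>l<r. w l * S $$ (l, m)) + \<delta> * S $$ (r, m) = 0" if m: "m < Suc r" for m
  proof -
    have "(\<Sum>l<Suc r. adj_mat S $$ (r, l) * S $$ (l, m)) = (adj_mat S * S) $$ (r, m)"
      using S adj_mat(1)[OF S] m by (simp add: scalar_prod_def atLeast0LessThan)
    also have "\<dots> = 0"
      using adj_mat(3)[OF S] singular m by (simp add: S_def)
    finally show ?thesis by (simp add: w_def \<delta>_def)
  qed
  have "poly \<delta> 0 = 1"
  proof -
    have "map_mat (\<lambda>q. poly q 0) (mat_delete S r r) = 1\<^sub>m r"
      using S by (intro eq_matI) (simp_all add: mat_delete_def S_index)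
    then show ?thesis
      using S comm_ring_hom.hom_det[OF poly_hom.comm_ring_hom_axioms, of 0 "mat_delete S r r"]
      by (simp add: \<delta>_def adj_mat_def cofactor_def)
  qed
  moreover have "w l + pCons 0 ((\<Sum>m<r. smult (A $$ (m, l)) (w m)) + smult (b $ l) \<delta>) = 0"
    if l: "l < r" for l
  proof -
    have "w m * S $$ (m, l) = (if m = l then w m else 0) + pCons 0 (smult (A $$ (m, l)) (w m))"
      if "m < r" for m
      using that l by (simp add: S_index)
    then have "(\<Sum>m<r. w m * S $$ (m, l)) = w l + pCons 0 (\<Sum>m<r. smult (A $$ (m, l)) (w m))"
      using l by (simp add: sum.distrib sum_pCons_0_commute)
    then show ?thesis
      using null[of l] l by (simp add: S_index add.assoc add_pCons)
  qed
  moreover have "pCons 0 ((\<Sum>m<r. smult (c $ m) (w m)) + smult d \<delta>) = 0"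
    using null[of r] by (simp add: S_index sum_pCons_0_commute)
  ultimately show ?thesis
    using markov_zero_of_left_null_vector[OF A c] by blast
qed

lemma index_mult_pow_mat:
  assumes A: "A \<in> carrier_mat r r" and B: "B \<in> carrier_mat m r" and C: "C \<in> carrier_mat r q"
    and i: "i < m" and j: "j < q"
  shows "(B * A ^\<^sub>m k * C) $$ (i, j) = row B i \<bullet> (A ^\<^sub>m k *\<^sub>v col C j)"
proof -
  have "B * A ^\<^sub>m k * C = B * (A ^\<^sub>m k * C)"
    using A B C by (intro assoc_mult_mat) auto
  then show ?thesis
    using A B C i j by (simp add: col_mult2[of _ r r C q])
qed

lemma det_bordered_minor_eq_0:
  fixes A B C D :: "'a::field mat"
  assumes r_n: "r \<le> n" and r_p: "r \<le> p"
    and A: "A \<in> carrier_mat r r" and C: "C \<in> carrier_mat r (p - r)"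
    and B: "B \<in> carrier_mat (n - r) r" and D: "D \<in> carrier_mat (n - r) (p - r)"
    and rk: "vec_space.rank n (J_mat n p r + t \<cdot>\<^sub>m four_block_mat A C B D) \<le> r"
    and i: "i < n - r" and j: "j < p - r"
  shows "det (J_mat (Suc r) (Suc r) r + t \<cdot>\<^sub>m bordered_mat A (row B i) (col C j) (D $$ (i, j))) = 0"
proof -
  define X where "X = J_mat n p r + t \<cdot>\<^sub>m four_block_mat A C B D"
  let ?I = "insert (r + i) {..<r}" and ?J = "insert (r + j) {..<r}"
  have X: "X \<in> carrier_mat n p"
    using four_block_carrier_mat[OF A D] r_n r_p by (simp add: X_def)
  have "submatrix X ?I ?J
      = mat (Suc r) (Suc r) (\<lambda>(a, b). X $$ (if a < r then a else r + i, if b < r then b else r + j))"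
    by (rule submatrix_insert_lessThan) (use X i j in auto)
  also have "\<dots> = J_mat (Suc r) (Suc r) r + t \<cdot>\<^sub>m bordered_mat A (row B i) (col C j) (D $$ (i, j))"
    using X A B C D i j r_n r_p
    by (intro eq_matI)
      (simp_all add: X_def J_mat_def bordered_mat_def mat_of_rows_index mat_of_cols_Cons_index_0)
  finally have minor: "submatrix X ?I ?J = \<dots>" .
  have "{b. b < p \<and> b \<in> ?J} = ?J" using j by auto
  then have "card {b. b < p \<and> b \<in> ?J} > vec_space.rank n X"
    using rk by (simp add: X_def)
  then show ?thesis
    using vec_space.rank_gt_minor[OF X, of ?I ?J] unfolding minor by linarith
qed

theorem corollary8:
  fixes n p r :: nat
    and A B C D :: "'a :: field mat"
  assumes r_pos: "0 < r" and r_n: "r \<le> n" and r_p: "r \<le> p"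
    and card_F: "infinite (UNIV :: 'a set) \<or> card (UNIV :: 'a set) > r + 1"
    and A: "A \<in> carrier_mat r r"
    and C: "C \<in> carrier_mat r (p - r)"
    and B: "B \<in> carrier_mat (n - r) r"
    and D: "D \<in> carrier_mat (n - r) (p - r)"
    and rk: "\<forall>t :: 'a. vec_space.rank n (J_mat n p r + t \<cdot>\<^sub>m four_block_mat A C B D) \<le> r"
  shows "D = 0\<^sub>m (n - r) (p - r) \<and> (\<forall>k :: nat. B * (A ^\<^sub>m k) * C = 0\<^sub>m (n - r) (p - r))"
proof -
  have markov: "D $$ (i, j) = 0 \<and> (\<forall>k. row B i \<bullet> (A ^\<^sub>m k *\<^sub>v col C j) = 0)"
    if i: "i < n - r" and j: "j < p - r" for i j
  proof (rule markov_zero_of_det_bordered_pencil[OF A])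
    show "row B i \<in> carrier_vec r" "col C j \<in> carrier_vec r"
      using B C by auto
    show "det (pencil (J_mat (Suc r) (Suc r) r) (bordered_mat A (row B i) (col C j) (D $$ (i, j)))) = 0"
      using det_bordered_minor_eq_0[OF r_n r_p A C B D rk[rule_format] i j] A card_F
      by (intro det_pencil_eq_0) auto
  qed
  have "D = 0\<^sub>m (n - r) (p - r)"
    by (rule eq_matI) (use D markov in auto)
  moreover have "B * A ^\<^sub>m k * C = 0\<^sub>m (n - r) (p - r)" for k
    by (rule eq_matI) (use A B C markov index_mult_pow_mat[OF A B C] in auto)
  ultimately show ?thesis by blast
qed

end
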